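(* Let $M$ be an $m$-dimensional manifold and $C$ a compact subset of $M$. Let $f:\mathbb{R}^n\times M\to\mathbb{R}$ be $C^\infty$, let $x_0\in C$, and define $g:M\to\mathbb{R}$ by $g(x)=f(0,x)$. Assume that $g|_C$ attains an absolute minimum at $x_0$ and that $x_0$ is the only point of $C$ where this minimum is attained; that $g$ has a critical point at $x_0$ with positive definite Hessian there; and that there exists $\zeta>0$ such that for all $p\in\mathbb{R}^n$ with $|p|<\zeta$ the function $M\to\mathbb{R}$, $x\mapsto f(p,x)$, has a critical point at $x_0$. Then there exists $\epsilon>0$ such that for all $p\in\mathbb{R}^n$ with $|p|<\epsilon$, the function $C\to\mathbb{R}$, $x\mapsto f(p,x)$, attains an absolute minimum at $x_0$. *)

theory Defs
  imports "HOL-Analysis.Analysis"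
begin

fun Ck_on :: "nat \<Rightarrow> 'a::euclidean_space set \<Rightarrow> ('a \<Rightarrow> real) \<Rightarrow> bool" where
  "Ck_on 0 S h = continuous_on S h"
| "Ck_on (Suc k) S h =
     (h differentiable_on S \<and>
      (\<forall>b\<in>Basis. Ck_on k S (\<lambda>x. frechet_derivative h (at x) b)))"

definition smooth_on :: "'a::euclidean_space set \<Rightarrow> ('a \<Rightarrow> real) \<Rightarrow> bool" where
  "smooth_on S h \<longleftrightarrow> (\<forall>k. Ck_on k S h)"

definition smooth_map_on :: "'a::euclidean_space set \<Rightarrow> ('a \<Rightarrow> 'b::euclidean_space) \<Rightarrow> bool" where
  "smooth_map_on S F \<longleftrightarrow> (\<forall>b\<in>Basis. smooth_on S (\<lambda>x. F x \<bullet> b))"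

text \<open>The manifold is the whole (Hausdorff, second countable) type 'a; charts are pairs
  (U, phi) with U open and phi a homeomorphism of U onto an open subset of the model
  Euclidean space 'e (dimension m = DIM('e)).\<close>
definition smooth_atlas ::
  "('a::{t2_space,second_countable_topology} set \<times> ('a \<Rightarrow> 'e::euclidean_space)) set \<Rightarrow> bool" where
  "smooth_atlas A \<longleftrightarrow>
     (\<forall>(U,\<phi>)\<in>A. open U \<and> open (\<phi> ` U) \<and> (\<exists>\<psi>. homeomorphism U (\<phi> ` U) \<phi> \<psi>)) \<and>
     (\<Union>(U,\<phi>)\<in>A. U) = UNIV \<and>
     (\<forall>(U,\<phi>)\<in>A. \<forall>(V,\<psi>)\<in>A. smooth_map_on (\<phi> ` (U \<inter> V)) (\<psi> \<circ> inv_into U \<phi>))"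

definition smooth_param_fun ::
  "('a set \<times> ('a \<Rightarrow> 'e::euclidean_space)) set \<Rightarrow> ('n::euclidean_space \<Rightarrow> 'a \<Rightarrow> real) \<Rightarrow> bool" where
  "smooth_param_fun A f \<longleftrightarrow>
     (\<forall>(U,\<phi>)\<in>A. smooth_on (UNIV \<times> \<phi> ` U) (\<lambda>(p,y). f p (inv_into U \<phi> y)))"

definition critical_point ::
  "('a set \<times> ('a \<Rightarrow> 'e::euclidean_space)) set \<Rightarrow> ('a \<Rightarrow> real) \<Rightarrow> 'a \<Rightarrow> bool" where
  "critical_point A F x0 \<longleftrightarrow>
     (\<forall>(U,\<phi>)\<in>A. x0 \<in> U \<longrightarrow> ((F \<circ> inv_into U \<phi>) has_derivative (\<lambda>_. 0)) (at (\<phi> x0)))"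

definition hessian :: "('e::euclidean_space \<Rightarrow> real) \<Rightarrow> 'e \<Rightarrow> 'e \<Rightarrow> 'e \<Rightarrow> real" where
  "hessian h y i j = frechet_derivative (\<lambda>z. frechet_derivative h (at z) j) (at y) i"

definition pos_def_hessian :: "('e::euclidean_space \<Rightarrow> real) \<Rightarrow> 'e \<Rightarrow> bool" where
  "pos_def_hessian h y \<longleftrightarrow>
     (\<forall>v::'e. v \<noteq> 0 \<longrightarrow> (\<Sum>i\<in>Basis. \<Sum>j\<in>Basis. (v \<bullet> i) * (v \<bullet> j) * hessian h y i j) > 0)"

definition pos_def_hessian_at ::
  "('a set \<times> ('a \<Rightarrow> 'e::euclidean_space)) set \<Rightarrow> ('a \<Rightarrow> real) \<Rightarrow> 'a \<Rightarrow> bool" where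
  "pos_def_hessian_at A F x0 \<longleftrightarrow>
     (\<forall>(U,\<phi>)\<in>A. x0 \<in> U \<longrightarrow> pos_def_hessian (F \<circ> inv_into U \<phi>) (\<phi> x0))"

end

theory Submission
  imports Defs
begin

text \<open>In a chart around x0, the Hessian of f p in the manifold variable depends continuously on
  p and the point, so it stays positive definite near (0, x0). Since x0 stays critical for small p,
  f p restricted to any segment through x0 is convex near x0, which makes x0 a minimum of f p on a
  fixed neighbourhood N of x0, uniformly in small p. On the compact set C - N, the strict
  inequality f 0 x0 < f 0 x persists for small p by joint continuity and the tube lemma.\<close>

definition quadratic_form :: "('e::euclidean_space \<Rightarrow> 'e \<Rightarrow> real) \<Rightarrow> 'e \<Rightarrow> real" where
  "quadratic_form H v = (\<Sum>i\<in>Basis. \<Sum>j\<in>Basis. (v \<bullet> i) * (v \<bullet> j) * H i j)"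

lemma pos_def_hessian_iff_quadratic_form:
  "pos_def_hessian h y \<longleftrightarrow> (\<forall>v. v \<noteq> 0 \<longrightarrow> 0 < quadratic_form (hessian h y) v)"
  by (simp add: pos_def_hessian_def quadratic_form_def)

lemma quadratic_form_zero [simp]: "quadratic_form H 0 = 0"
  by (simp add: quadratic_form_def)

lemma quadratic_form_cong:
  "(\<And>i j. i \<in> Basis \<Longrightarrow> j \<in> Basis \<Longrightarrow> H i j = K i j) \<Longrightarrow> quadratic_form H v = quadratic_form K v"
  by (simp add: quadratic_form_def)

lemma quadratic_form_scaleR: "quadratic_form H (a *\<^sub>R v) = a\<^sup>2 * quadratic_form H v"
  by (simp add: quadratic_form_def sum_distrib_left power2_eq_square mult_ac)

lemma quadratic_form_diff:
  "quadratic_form H v - quadratic_form K v = quadratic_form (\<lambda>i j. H i j - K i j) v"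
  by (simp add: quadratic_form_def sum_subtractf right_diff_distrib)

lemma abs_quadratic_form_le:
  "\<bar>quadratic_form H v\<bar> \<le> (\<Sum>i\<in>Basis. \<Sum>j\<in>Basis. \<bar>H i j\<bar>) * (norm v)\<^sup>2"
proof -
  have "\<bar>quadratic_form H v\<bar> \<le> (\<Sum>i\<in>Basis. \<Sum>j\<in>Basis. \<bar>(v \<bullet> i) * (v \<bullet> j) * H i j\<bar>)"
    unfolding quadratic_form_def by (rule order_trans[OF sum_abs sum_mono]) (rule sum_abs)
  also have "\<dots> \<le> (\<Sum>i\<in>Basis. \<Sum>j\<in>Basis. (norm v)\<^sup>2 * \<bar>H i j\<bar>)"
  proof (intro sum_mono)
    fix i j :: 'a assume "i \<in> Basis" "j \<in> Basis"
    then have "\<bar>v \<bullet> i\<bar> * \<bar>v \<bullet> j\<bar> \<le> norm v * norm v"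
      by (intro mult_mono) (auto simp: Basis_le_norm)
    then show "\<bar>(v \<bullet> i) * (v \<bullet> j) * H i j\<bar> \<le> (norm v)\<^sup>2 * \<bar>H i j\<bar>"
      by (simp add: abs_mult power2_eq_square mult_right_mono)
  qed
  also have "\<dots> = (\<Sum>i\<in>Basis. \<Sum>j\<in>Basis. \<bar>H i j\<bar>) * (norm v)\<^sup>2"
    by (simp add: sum_distrib_left mult.commute)
  finally show ?thesis .
qed

lemma pos_def_quadratic_form_coercive:
  assumes pos: "\<forall>v. v \<noteq> 0 \<longrightarrow> 0 < quadratic_form H v"
  obtains c where "c > 0" "\<And>v. c * (norm v)\<^sup>2 \<le> quadratic_form H v"
proof -
  have "continuous_on (sphere 0 1) (quadratic_form H)"
    unfolding quadratic_form_def by (intro continuous_intros)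
  then obtain u where u: "u \<in> sphere 0 1"
    and min: "\<And>w. w \<in> sphere 0 1 \<Longrightarrow> quadratic_form H u \<le> quadratic_form H w"
    using continuous_attains_inf[OF compact_sphere, of 0 1] by fastforce
  have "quadratic_form H u > 0"
    using pos u by (metis mem_sphere_0 norm_zero zero_neq_one)
  moreover have "quadratic_form H u * (norm v)\<^sup>2 \<le> quadratic_form H v" for v
  proof (cases "v = 0")
    case True
    then show ?thesis by (simp add: quadratic_form_def)
  next
    case False
    then have "quadratic_form H u \<le> quadratic_form H (inverse (norm v) *\<^sub>R v)"
      by (intro min) simp
    also have "\<dots> = quadratic_form H v / (norm v)\<^sup>2"
      by (simp add: quadratic_form_scaleR power_inverse divide_inverse mult.commute)
    finally show ?thesis
      using False by (simp add: le_divide_eq)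
  qed
  ultimately show ?thesis using that by blast
qed

lemma eventually_pos_def_quadratic_form:
  fixes H :: "'e::euclidean_space \<Rightarrow> 'e \<Rightarrow> 'x::t2_space \<Rightarrow> real"
  assumes cont: "\<And>i j. i \<in> Basis \<Longrightarrow> j \<in> Basis \<Longrightarrow> isCont (H i j) x0"
    and pos: "\<forall>v. v \<noteq> 0 \<longrightarrow> 0 < quadratic_form (\<lambda>i j. H i j x0) v"
  shows "\<forall>\<^sub>F x in nhds x0. \<forall>v. v \<noteq> 0 \<longrightarrow> 0 < quadratic_form (\<lambda>i j. H i j x) v"
proof -
  obtain c where c: "c > 0" "\<And>v. c * (norm v)\<^sup>2 \<le> quadratic_form (\<lambda>i j. H i j x0) v"
    using pos_def_quadratic_form_coercive[OF pos] by blast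
  define M where "M x = (\<Sum>i\<in>Basis. \<Sum>j\<in>Basis. \<bar>H i j x - H i j x0\<bar>)" for x
  have "isCont M x0"
    unfolding M_def using cont by (intro continuous_intros) auto
  then have "\<forall>\<^sub>F x in nhds x0. M x < c"
    using c(1) order_tendstoD(2)[of M "M x0" "at x0" c]
    by (auto simp: eventually_nhds_conv_at isCont_def M_def)
  then show ?thesis
  proof (rule eventually_mono, intro allI impI)
    fix x and v :: 'e
    assume "M x < c" "v \<noteq> 0"
    have "quadratic_form (\<lambda>i j. H i j x0) v - quadratic_form (\<lambda>i j. H i j x) v \<le> M x * (norm v)\<^sup>2"
      using abs_quadratic_form_le[of "\<lambda>i j. H i j x0 - H i j x" v]
      by (simp add: quadratic_form_diff M_def abs_minus_commute)
    moreover have "M x * (norm v)\<^sup>2 < c * (norm v)\<^sup>2"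
      using \<open>M x < c\<close> \<open>v \<noteq> 0\<close> by simp
    ultimately show "0 < quadratic_form (\<lambda>i j. H i j x) v"
      using c(2)[of v] by linarith
  qed
qed

lemma critical_point_le_if_second_derivative_nonneg_real:
  fixes \<phi> \<psi> :: "real \<Rightarrow> real"
  assumes "a \<le> b"
    and d\<phi>: "\<And>t. t \<in> {a..b} \<Longrightarrow> (\<phi> has_real_derivative \<psi> t) (at t)"
    and d\<psi>: "\<And>t. t \<in> {a..b} \<Longrightarrow> (\<psi> has_real_derivative \<psi>' t) (at t)"
    and nonneg: "\<And>t. t \<in> {a..b} \<Longrightarrow> 0 \<le> \<psi>' t"
    and "\<psi> a = 0"
  shows "\<phi> a \<le> \<phi> b"
proof (rule DERIV_nonneg_imp_nondecreasing[OF \<open>a \<le> b\<close>])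
  fix t assume "a \<le> t" "t \<le> b"
  have "\<psi> a \<le> \<psi> t"
  proof (rule DERIV_nonneg_imp_nondecreasing[of a t \<psi>])
    fix s assume "a \<le> s" "s \<le> t"
    with \<open>t \<le> b\<close> have "s \<in> {a..b}"
      by simp
    then show "\<exists>d. (\<psi> has_real_derivative d) (at s) \<and> 0 \<le> d"
      using d\<psi> nonneg by blast
  qed fact
  with \<open>a \<le> t\<close> \<open>t \<le> b\<close> \<open>\<psi> a = 0\<close> show "\<exists>d. (\<phi> has_real_derivative d) (at t) \<and> 0 \<le> d"
    using d\<phi> by auto
qed

lemma critical_point_le_if_second_derivative_nonneg:
  fixes g :: "'a::real_normed_vector \<Rightarrow> real"
  assumes "convex S"
    and g': "\<And>y. y \<in> S \<Longrightarrow> (g has_derivative g' y) (at y)"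
    and g'': "\<And>y v. y \<in> S \<Longrightarrow> ((\<lambda>y. g' y v) has_derivative g'' y v) (at y)"
    and nonneg: "\<And>y v. y \<in> S \<Longrightarrow> 0 \<le> g'' y v v"
    and "y0 \<in> S" and crit: "g' y0 = (\<lambda>_. 0)" and "z \<in> S"
  shows "g y0 \<le> g z"
proof -
  define v where "v = z - y0"
  define \<gamma> where "\<gamma> t = y0 + t *\<^sub>R v" for t
  have \<gamma>S: "\<gamma> t \<in> S" if "t \<in> {0..1}" for t
  proof -
    have "(1 - t) *\<^sub>R y0 + t *\<^sub>R z \<in> S"
      using \<open>convex S\<close> \<open>y0 \<in> S\<close> \<open>z \<in> S\<close> that by (simp add: convex_alt)
    then show ?thesis
      by (simp add: \<gamma>_def v_def algebra_simps)
  qed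
  have d\<gamma>: "(\<gamma> has_derivative (\<lambda>s. s *\<^sub>R v)) (at t)" for t
    unfolding \<gamma>_def by (auto intro!: derivative_eq_intros)
  have "g (\<gamma> 0) \<le> g (\<gamma> 1)"
  proof (rule critical_point_le_if_second_derivative_nonneg_real[where \<phi> = "\<lambda>t. g (\<gamma> t)"
        and \<psi> = "\<lambda>t. g' (\<gamma> t) v" and \<psi>' = "\<lambda>t. g'' (\<gamma> t) v v"])
    fix t :: real assume "t \<in> {0..1}"
    have "((\<lambda>t. g (\<gamma> t)) has_derivative (\<lambda>s. g' (\<gamma> t) (s *\<^sub>R v))) (at t)"
      using diff_chain_at[OF d\<gamma> g'[OF \<gamma>S]] \<open>t \<in> {0..1}\<close> by (simp add: o_def)
    moreover have "(\<lambda>s. g' (\<gamma> t) (s *\<^sub>R v)) = (*) (g' (\<gamma> t) v)"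
      using linear_cmul[OF has_derivative_linear[OF g'[OF \<gamma>S]]] \<open>t \<in> {0..1}\<close>
      by (simp add: fun_eq_iff)
    ultimately show "((\<lambda>t. g (\<gamma> t)) has_real_derivative g' (\<gamma> t) v) (at t)"
      by (simp add: has_field_derivative_def)
    have "((\<lambda>t. g' (\<gamma> t) v) has_derivative (\<lambda>s. g'' (\<gamma> t) v (s *\<^sub>R v))) (at t)"
      using diff_chain_at[OF d\<gamma> g''[OF \<gamma>S]] \<open>t \<in> {0..1}\<close> by (simp add: o_def)
    moreover have "(\<lambda>s. g'' (\<gamma> t) v (s *\<^sub>R v)) = (*) (g'' (\<gamma> t) v v)"
      using linear_cmul[OF has_derivative_linear[OF g''[OF \<gamma>S]]] \<open>t \<in> {0..1}\<close>
      by (simp add: fun_eq_iff)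
    ultimately show "((\<lambda>t. g' (\<gamma> t) v) has_real_derivative g'' (\<gamma> t) v v) (at t)"
      by (simp add: has_field_derivative_def)
    show "0 \<le> g'' (\<gamma> t) v v"
      using nonneg \<gamma>S \<open>t \<in> {0..1}\<close> by blast
  qed (use crit in \<open>simp_all add: \<gamma>_def\<close>)
  then show ?thesis
    by (simp add: \<gamma>_def v_def)
qed

lemma critical_point_le_if_hessian_psd:
  fixes g :: "'e::euclidean_space \<Rightarrow> real"
  assumes "convex S"
    and dg: "\<And>y. y \<in> S \<Longrightarrow> (g has_derivative (\<lambda>w. \<Sum>j\<in>Basis. (w \<bullet> j) * Dg j y)) (at y)"
    and dDg: "\<And>y j. y \<in> S \<Longrightarrow> j \<in> Basis \<Longrightarrow>
               (Dg j has_derivative (\<lambda>w. \<Sum>i\<in>Basis. (w \<bullet> i) * D2g i j y)) (at y)"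
    and psd: "\<And>y v. y \<in> S \<Longrightarrow> 0 \<le> quadratic_form (\<lambda>i j. D2g i j y) v"
    and "y0 \<in> S" and crit: "\<And>j. j \<in> Basis \<Longrightarrow> Dg j y0 = 0" and "z \<in> S"
  shows "g y0 \<le> g z"
proof (rule critical_point_le_if_second_derivative_nonneg[OF \<open>convex S\<close> dg])
  fix y v assume "y \<in> S"
  show "((\<lambda>y. \<Sum>j\<in>Basis. (v \<bullet> j) * Dg j y) has_derivative
          (\<lambda>w. \<Sum>j\<in>Basis. (v \<bullet> j) * (\<Sum>i\<in>Basis. (w \<bullet> i) * D2g i j y))) (at y)"
    using dDg \<open>y \<in> S\<close> by (intro has_derivative_sum has_derivative_mult_right) auto
  have "(\<Sum>j\<in>Basis. (v \<bullet> j) * (\<Sum>i\<in>Basis. (v \<bullet> i) * D2g i j y)) = quadratic_form (\<lambda>i j. D2g i j y) v"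
    unfolding quadratic_form_def by (subst sum.swap) (simp add: sum_distrib_left mult_ac)
  with psd[OF \<open>y \<in> S\<close>] show "0 \<le> (\<Sum>j\<in>Basis. (v \<bullet> j) * (\<Sum>i\<in>Basis. (v \<bullet> i) * D2g i j y))"
    by simp
next
  show "(\<lambda>w. \<Sum>j\<in>Basis. (w \<bullet> j) * Dg j y0) = (\<lambda>_. 0)"
    using crit by (intro ext sum.neutral) simp
qed (use \<open>y0 \<in> S\<close> \<open>z \<in> S\<close> in auto)

lemma hessian_eq_second_partials:
  fixes g :: "'e::euclidean_space \<Rightarrow> real"
  assumes "open V" "y \<in> V"
    and dg: "\<And>z. z \<in> V \<Longrightarrow> (g has_derivative (\<lambda>w. \<Sum>j\<in>Basis. (w \<bullet> j) * Dg j z)) (at z)"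
    and dDg: "(Dg j has_derivative (\<lambda>w. \<Sum>i\<in>Basis. (w \<bullet> i) * D2g i j y)) (at y)"
    and "i \<in> Basis" "j \<in> Basis"
  shows "hessian g y i j = D2g i j y"
proof -
  have "frechet_derivative g (at z) j = Dg j z" if "z \<in> V" for z
    using frechet_derivative_at[OF dg[OF that], symmetric] \<open>j \<in> Basis\<close>
    by (simp add: inner_commute[of j])
  then have "((\<lambda>z. frechet_derivative g (at z) j) has_derivative
               (\<lambda>w. \<Sum>i\<in>Basis. (w \<bullet> i) * D2g i j y)) (at y)"
    by (intro has_derivative_transform_within_open[OF dDg \<open>open V\<close> \<open>y \<in> V\<close>]) simp
  from frechet_derivative_at[OF this, symmetric] \<open>i \<in> Basis\<close> show ?thesis
    by (simp add: hessian_def inner_commute[of i])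
qed

lemma has_derivative_partials_right:
  fixes F :: "'n::real_normed_vector \<times> 'e::euclidean_space \<Rightarrow> real"
  assumes "F differentiable (at (p, y))"
  shows "((\<lambda>z. F (p, z)) has_derivative
           (\<lambda>w. \<Sum>j\<in>Basis. (w \<bullet> j) * frechet_derivative F (at (p, y)) (0, j))) (at y)"
proof -
  have "((\<lambda>z. (p, z)) has_derivative (\<lambda>w. (0, w))) (at y)"
    by (auto intro!: derivative_eq_intros)
  from diff_chain_at[OF this assms[unfolded frechet_derivative_works]]
  have slice: "((\<lambda>z. F (p, z)) has_derivative (\<lambda>w. frechet_derivative F (at (p, y)) (0, w))) (at y)"
    by (simp add: o_def)
  have "(\<lambda>w. frechet_derivative F (at (p, y)) (0, w)) =
        (\<lambda>w. \<Sum>j\<in>Basis. (w \<bullet> j) * frechet_derivative F (at (p, y)) (0, j))"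
  proof
    fix w :: 'e
    show "frechet_derivative F (at (p, y)) (0, w) =
          (\<Sum>j\<in>Basis. (w \<bullet> j) * frechet_derivative F (at (p, y)) (0, j))"
      using Linear_Algebra.linear_componentwise[OF has_derivative_linear[OF slice], of w 1] by simp
  qed
  with slice show ?thesis
    by (simp only:)
qed

lemma smooth_on_imp_C2:
  fixes F :: "'a::euclidean_space \<Rightarrow> real"
  assumes "smooth_on S F"
  shows "F differentiable_on S"
    and "\<And>b. b \<in> Basis \<Longrightarrow> (\<lambda>x. frechet_derivative F (at x) b) differentiable_on S"
    and "\<And>b c. b \<in> Basis \<Longrightarrow> c \<in> Basis \<Longrightarrow>
           continuous_on S (\<lambda>y. frechet_derivative (\<lambda>x. frechet_derivative F (at x) b) (at y) c)"
  using assms[unfolded smooth_on_def, rule_format, of 2] by (auto simp: numeral_2_eq_2)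

lemma eventually_nhds_Pair_ball:
  fixes b :: "'b::metric_space"
  assumes "\<forall>\<^sub>F x in nhds (a, b). P x"
  shows "\<exists>r>0. \<forall>\<^sub>F p in nhds a. \<forall>z\<in>ball b r. P (p, z)"
proof -
  obtain Q R where Q: "eventually Q (nhds a)" and "eventually R (nhds b)"
    and QR: "\<And>p z. Q p \<Longrightarrow> R z \<Longrightarrow> P (p, z)"
    using assms unfolding nhds_prod eventually_prod_filter by blast
  then obtain r where "r > 0" and "\<And>z. z \<in> ball b r \<Longrightarrow> R z"
    unfolding eventually_nhds_metric by (metis mem_ball dist_commute)
  with Q QR show ?thesis
    by (auto elim!: eventually_mono)
qed

lemma smooth_on_Times_partials_right:
  fixes F :: "'n::euclidean_space \<times> 'e::euclidean_space \<Rightarrow> real"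
  assumes smooth: "smooth_on (UNIV \<times> V) F" and "open V"
  obtains G H where
    "\<And>p y. y \<in> V \<Longrightarrow>
       ((\<lambda>z. F (p, z)) has_derivative (\<lambda>w. \<Sum>j\<in>Basis. (w \<bullet> j) * G j (p, y))) (at y)"
    "\<And>p y j. y \<in> V \<Longrightarrow> j \<in> Basis \<Longrightarrow>
       ((\<lambda>z. G j (p, z)) has_derivative (\<lambda>w. \<Sum>i\<in>Basis. (w \<bullet> i) * H i j (p, y))) (at y)"
    "\<And>p y i j. y \<in> V \<Longrightarrow> i \<in> Basis \<Longrightarrow> j \<in> Basis \<Longrightarrow> isCont (H i j) (p, y)"
proof -
  define G where "G j x = frechet_derivative F (at x) (0, j)" for j x
  define H where "H i j x = frechet_derivative (G j) (at x) (0, i)" for i j x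
  have "open (UNIV \<times> V)"
    using \<open>open V\<close> by (simp add: open_Times)
  note C2 = smooth_on_imp_C2[OF smooth]
  have diff_F: "F differentiable (at (p, y))" if "y \<in> V" for p y
    using C2(1) that unfolding differentiable_on_eq_differentiable_at[OF \<open>open (UNIV \<times> V)\<close>] by simp
  have dF: "((\<lambda>z. F (p, z)) has_derivative (\<lambda>w. \<Sum>j\<in>Basis. (w \<bullet> j) * G j (p, y))) (at y)"
    if "y \<in> V" for p y
    unfolding G_def by (rule has_derivative_partials_right[OF diff_F[OF that]])
  have diff_G: "G j differentiable (at (p, y))" if "y \<in> V" "j \<in> Basis" for p y j
    using C2(2)[of "(0, j)"] that
    unfolding differentiable_on_eq_differentiable_at[OF \<open>open (UNIV \<times> V)\<close>]
    by (simp add: G_def[abs_def] Basis_prod_def)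
  have dG: "((\<lambda>z. G j (p, z)) has_derivative (\<lambda>w. \<Sum>i\<in>Basis. (w \<bullet> i) * H i j (p, y))) (at y)"
    if "y \<in> V" "j \<in> Basis" for p y j
    unfolding H_def by (rule has_derivative_partials_right[OF diff_G[OF that]])
  have "isCont (H i j) (p, y)" if "y \<in> V" "i \<in> Basis" "j \<in> Basis" for p y i j
    using C2(3)[of "(0, j)" "(0, i)"] that
    unfolding continuous_on_eq_continuous_at[OF \<open>open (UNIV \<times> V)\<close>]
    by (simp add: G_def[abs_def] H_def[abs_def] Basis_prod_def)
  with dF dG show ?thesis
    using that by blast
qed

lemma eventually_local_min_at_nondegenerate_critical_point:
  fixes F :: "'n::euclidean_space \<times> 'e::euclidean_space \<Rightarrow> real"
  assumes smooth: "smooth_on (UNIV \<times> V) F" and "open V" "y0 \<in> V"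
    and crit: "\<forall>\<^sub>F p in nhds p0. ((\<lambda>y. F (p, y)) has_derivative (\<lambda>_. 0)) (at y0)"
    and pd: "pos_def_hessian (\<lambda>y. F (p0, y)) y0"
  obtains r where "r > 0" "ball y0 r \<subseteq> V"
    and "\<forall>\<^sub>F p in nhds p0. \<forall>z\<in>ball y0 r. F (p, y0) \<le> F (p, z)"
proof -
  obtain G H where dF: "\<And>p y. y \<in> V \<Longrightarrow>
       ((\<lambda>z. F (p, z)) has_derivative (\<lambda>w. \<Sum>j\<in>Basis. (w \<bullet> j) * G j (p, y))) (at y)"
    and dG: "\<And>p y j. y \<in> V \<Longrightarrow> j \<in> Basis \<Longrightarrow>
       ((\<lambda>z. G j (p, z)) has_derivative (\<lambda>w. \<Sum>i\<in>Basis. (w \<bullet> i) * H i j (p, y))) (at y)"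
    and cont: "\<And>p y i j. y \<in> V \<Longrightarrow> i \<in> Basis \<Longrightarrow> j \<in> Basis \<Longrightarrow> isCont (H i j) (p, y)"
    using smooth_on_Times_partials_right[OF smooth \<open>open V\<close>] by blast
  have "hessian (\<lambda>y. F (p0, y)) y0 i j = H i j (p0, y0)" if "i \<in> Basis" "j \<in> Basis" for i j
    by (rule hessian_eq_second_partials[where Dg = "\<lambda>j z. G j (p0, z)"
          and D2g = "\<lambda>i j z. H i j (p0, z)", OF \<open>open V\<close> \<open>y0 \<in> V\<close> dF dG[OF \<open>y0 \<in> V\<close> that(2)] that])
  then have "quadratic_form (hessian (\<lambda>y. F (p0, y)) y0) v =
      quadratic_form (\<lambda>i j. H i j (p0, y0)) v" for v
    by (rule quadratic_form_cong)
  then have "\<forall>\<^sub>F x in nhds (p0, y0). \<forall>v. v \<noteq> 0 \<longrightarrow> 0 < quadratic_form (\<lambda>i j. H i j x) v"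
    using pd cont \<open>y0 \<in> V\<close>
    by (intro eventually_pos_def_quadratic_form) (auto simp: pos_def_hessian_iff_quadratic_form)
  moreover have "\<forall>\<^sub>F x in nhds (p0, y0). x \<in> UNIV \<times> V"
    using \<open>open V\<close> \<open>y0 \<in> V\<close> by (intro eventually_nhds_in_open) (auto simp: open_Times)
  ultimately have "\<forall>\<^sub>F x in nhds (p0, y0).
      x \<in> UNIV \<times> V \<and> (\<forall>v. 0 \<le> quadratic_form (\<lambda>i j. H i j x) v)"
    by eventually_elim (metis less_imp_le quadratic_form_zero order_refl)
  then obtain r where "r > 0" and near: "\<forall>\<^sub>F p in nhds p0. \<forall>z\<in>ball y0 r.
      (p, z) \<in> UNIV \<times> V \<and> (\<forall>v. 0 \<le> quadratic_form (\<lambda>i j. H i j (p, z)) v)"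
    using eventually_nhds_Pair_ball by blast
  then have "ball y0 r \<subseteq> V"
    using eventually_nhds_x_imp_x[OF near] by auto
  moreover have "\<forall>\<^sub>F p in nhds p0. \<forall>z\<in>ball y0 r. F (p, y0) \<le> F (p, z)"
    using near crit
  proof eventually_elim
    case (elim p)
    have "G j (p, y0) = 0" if "j \<in> Basis" for j
      using fun_cong[OF has_derivative_unique[OF dF[OF \<open>y0 \<in> V\<close>] elim(2)], of j] that
      by (simp add: inner_commute[of j])
    moreover have "y \<in> V" if "y \<in> ball y0 r" for y
      using that \<open>ball y0 r \<subseteq> V\<close> by blast
    ultimately show ?case
      using elim(1) \<open>r > 0\<close>
      by (intro ballI critical_point_le_if_hessian_psd[where S = "ball y0 r"
            and Dg = "\<lambda>j z. G j (p, z)" and D2g = "\<lambda>i j z. H i j (p, z)", OF convex_ball dF dG])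
        simp_all
  qed
  ultimately show ?thesis
    using \<open>r > 0\<close> that by blast
qed

lemma smooth_atlas_chart_at:
  assumes "smooth_atlas A"
  obtains U \<phi> where "(U, \<phi>) \<in> A" "x \<in> U" "open U" "open (\<phi> ` U)" "continuous_on U \<phi>" "inj_on \<phi> U"
proof -
  obtain U \<phi> where chart: "(U, \<phi>) \<in> A" "x \<in> U"
    using assms unfolding smooth_atlas_def by blast
  moreover obtain \<psi> where "homeomorphism U (\<phi> ` U) \<phi> \<psi>" "open U" "open (\<phi> ` U)"
    using assms chart unfolding smooth_atlas_def by fast
  ultimately show ?thesis
    using that unfolding homeomorphism_def by (metis inj_on_inverseI)
qed

lemma smooth_param_fun_continuous:
  assumes atlas: "smooth_atlas A" and smooth: "smooth_param_fun A f"
  shows "continuous_on UNIV (\<lambda>(p, x). f p x)"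
proof (rule continuous_at_imp_continuous_on, safe)
  fix p x
  obtain U \<phi> where chart: "(U, \<phi>) \<in> A" "x \<in> U" "open U" "continuous_on U \<phi>" "inj_on \<phi> U"
    using smooth_atlas_chart_at[OF atlas] by blast
  define F where "F = (\<lambda>(p, y). f p (inv_into U \<phi> y))"
  have "continuous_on (UNIV \<times> \<phi> ` U) F"
    using smooth chart(1) Ck_on.simps(1)
    unfolding smooth_param_fun_def smooth_on_def F_def by fast
  moreover have "continuous_on (UNIV \<times> U) (\<lambda>(p, x). (p, \<phi> x))"
    by (auto intro!: continuous_intros continuous_on_compose2[OF chart(4)] simp: case_prod_unfold)
  ultimately have "continuous_on (UNIV \<times> U) (F \<circ> (\<lambda>(p, x). (p, \<phi> x)))"
    by (intro continuous_on_compose) (auto elim!: continuous_on_subset)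
  moreover have "(F \<circ> (\<lambda>(p, x). (p, \<phi> x))) q = (\<lambda>(p, x). f p x) q" if "q \<in> UNIV \<times> U" for q
    using that chart(5) by (auto simp: F_def)
  ultimately have "continuous_on (UNIV \<times> U) (\<lambda>(p, x). f p x)"
    using continuous_on_cong by (metis (no_types, lifting))
  then show "isCont (\<lambda>(p, x). f p x) (p, x)"
    using chart(2,3) by (simp add: open_Times continuous_on_eq_continuous_at)
qed

lemma smooth_param_fun_eventually_local_min:
  assumes atlas: "smooth_atlas A" and smooth: "smooth_param_fun A f"
    and crit: "\<forall>\<^sub>F p in nhds p0. critical_point A (f p) x0"
    and pd: "pos_def_hessian_at A (f p0) x0"
  obtains N where "open N" "x0 \<in> N" "\<forall>\<^sub>F p in nhds p0. \<forall>x\<in>N. f p x0 \<le> f p x"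
proof -
  obtain U \<phi> where chart: "(U, \<phi>) \<in> A" "x0 \<in> U" "open U" "open (\<phi> ` U)"
    "continuous_on U \<phi>" "inj_on \<phi> U"
    using smooth_atlas_chart_at[OF atlas] by blast
  define F where "F = (\<lambda>(p, y). f p (inv_into U \<phi> y))"
  have slice: "(\<lambda>y. F (p, y)) = f p \<circ> inv_into U \<phi>" for p
    by (simp add: F_def o_def)
  have smooth_F: "smooth_on (UNIV \<times> \<phi> ` U) F"
    using smooth chart(1) unfolding smooth_param_fun_def F_def by fast
  have crit_F: "\<forall>\<^sub>F p in nhds p0. ((\<lambda>y. F (p, y)) has_derivative (\<lambda>_. 0)) (at (\<phi> x0))"
    using crit by eventually_elim (use chart(1,2) in \<open>auto simp: critical_point_def slice\<close>)
  have pd_F: "pos_def_hessian (\<lambda>y. F (p0, y)) (\<phi> x0)"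
    using pd chart(1,2) by (auto simp: pos_def_hessian_at_def slice)
  obtain r where "r > 0" "ball (\<phi> x0) r \<subseteq> \<phi> ` U"
    and local_min: "\<forall>\<^sub>F p in nhds p0. \<forall>y\<in>ball (\<phi> x0) r. F (p, \<phi> x0) \<le> F (p, y)"
    using eventually_local_min_at_nondegenerate_critical_point
      [OF smooth_F chart(4) imageI[OF chart(2)] crit_F pd_F] .
  show ?thesis
  proof
    show "open (U \<inter> \<phi> -` ball (\<phi> x0) r)"
      using continuous_on_open_vimage[OF chart(3)] chart(5) by (metis open_ball Int_commute)
    show "x0 \<in> U \<inter> \<phi> -` ball (\<phi> x0) r"
      using chart(2) \<open>r > 0\<close> by simp
    show "\<forall>\<^sub>F p in nhds p0. \<forall>x\<in>U \<inter> \<phi> -` ball (\<phi> x0) r. f p x0 \<le> f p x"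
      using local_min by eventually_elim (use chart(2,6) in \<open>auto simp: F_def\<close>)
  qed
qed

lemma eventually_min_on_compact:
  fixes f :: "'n::topological_space \<Rightarrow> 'a::topological_space \<Rightarrow> real"
  assumes cont: "continuous_on UNIV (\<lambda>(p, x). f p x)" and "compact C"
    and strict: "\<forall>x\<in>C. x \<noteq> x0 \<longrightarrow> f p0 x0 < f p0 x"
    and "open N" "x0 \<in> N" and local_min: "\<forall>\<^sub>F p in nhds p0. \<forall>x\<in>N. f p x0 \<le> f p x"
  shows "\<forall>\<^sub>F p in nhds p0. \<forall>x\<in>C. f p x0 \<le> f p x"
proof -
  define W where "W = {(p, x). f p x0 < f p x}"
  have "continuous_on UNIV (\<lambda>q::'n \<times> 'a. (fst q, x0))"
    by (intro continuous_intros)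
  from continuous_on_compose2[OF cont this] have "continuous_on UNIV (\<lambda>(p, x::'a). f p x0)"
    by (simp add: case_prod_unfold)
  from open_Collect_less[OF this cont] have "open W"
    by (simp add: W_def case_prod_unfold)
  moreover have "{p0} \<times> (C - N) \<subseteq> W"
    unfolding W_def using strict \<open>x0 \<in> N\<close> by fastforce
  ultimately obtain X where "p0 \<in> X" "open X" and tube: "X \<times> (C - N) \<subseteq> W"
    by (metis Elementary_Topology.tube_lemma compact_diff \<open>compact C\<close> \<open>open N\<close>)
  then have "\<forall>\<^sub>F p in nhds p0. p \<in> X"
    by (intro eventually_nhds_in_open)
  with local_min show ?thesis
  proof eventually_elim
    case (elim p)
    show ?case
    proof
      fix x assume "x \<in> C"
      show "f p x0 \<le> f p x"
      proof (cases "x \<in> N")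
        case False
        with elim(2) \<open>x \<in> C\<close> tube show ?thesis
          by (auto simp: W_def)
      qed (use elim(1) in auto)
    qed
  qed
qed

theorem lemma2p12:
  fixes A :: "('a::{t2_space,second_countable_topology} set \<times> ('a \<Rightarrow> 'e::euclidean_space)) set"
    and f :: "'n::euclidean_space \<Rightarrow> 'a \<Rightarrow> real"
    and C :: "'a set" and x0 :: 'a and \<zeta> :: real
  assumes "smooth_atlas A"
    and "compact C"
    and "smooth_param_fun A f"
    and "x0 \<in> C"
    and "\<forall>x\<in>C. f 0 x0 \<le> f 0 x"
    and "\<forall>x\<in>C. f 0 x = f 0 x0 \<longrightarrow> x = x0"
    and "critical_point A (f 0) x0"
    and "pos_def_hessian_at A (f 0) x0"
    and "\<zeta> > 0"
    and "\<forall>p. norm p < \<zeta> \<longrightarrow> critical_point A (f p) x0"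
  shows "\<exists>\<epsilon>>0. \<forall>p::'n. norm p < \<epsilon> \<longrightarrow> (\<forall>x\<in>C. f p x0 \<le> f p x)"
proof -
  have "\<forall>\<^sub>F p in nhds 0. critical_point A (f p) x0"
    using assms(9,10) unfolding eventually_nhds_metric by (auto simp: dist_norm)
  then obtain N where "open N" "x0 \<in> N" "\<forall>\<^sub>F p in nhds 0. \<forall>x\<in>N. f p x0 \<le> f p x"
    using smooth_param_fun_eventually_local_min[OF assms(1,3) _ assms(8)] by blast
  moreover have "\<forall>x\<in>C. x \<noteq> x0 \<longrightarrow> f 0 x0 < f 0 x"
    using assms(5,6) by force
  ultimately have "\<forall>\<^sub>F p in nhds 0. \<forall>x\<in>C. f p x0 \<le> f p x"
    using eventually_min_on_compact[OF smooth_param_fun_continuous[OF assms(1,3)] assms(2)] by blast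
  then show ?thesis
    unfolding eventually_nhds_metric by (auto simp: dist_norm)
qed

end
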